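(* Consider a single positioning infrastructure with $N_{\text{anc}}$ anchors providing ranging information, of which $N_{\text{adv}}$ are manipulated by an uncoordinated attacker, and let $N_{\text{min}}$ be the minimum number of anchors required for positioning. Suppose that $N_{\text{anc}}-N_{\text{adv}}>N_{\text{min}}$. Then the true position $\mathbf{p}_{\text{usr}}(t)$ can be recovered (the spoofed subset position estimates can be excluded, leaving benign estimates equal to $\mathbf{p}_{\text{usr}}(t)$).
   Context: Idealized model of subset-based integrity monitoring: a platform at unknown true position $\mathbf{p}_{\text{usr}}(t)\in\mathbb{R}^3$ receives ranging measurements from anchors with known positions (e.g., GNSS satellites, for which $N_{\text{min}}=4$). For every subset of anchors of size at least $N_{\text{min}}$, a position estimate is computed by multilateration. Positioning noise and uncertainties are taken to be negligible (zero) while attacker-induced deviations are preserved, and the anchor geometry is good, so every subset consisting only of benign (non-manipulated) measurements of size at least $N_{\text{min}}$ yields exactly $\mathbf{p}_{\text{usr}}(t)$. "Uncoordinated spoofing" means the manipulated ranging values are chosen independently (potentially randomly), so subset estimates involving manipulated measurements are random positions, almost surely inconsistent with the benign position and with each other. $C(n,k)$ denotes the binomial coefficient. *)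

theory Defs
  imports "HOL-Analysis.Analysis"
begin

definition usable_subsets :: "'a set \<Rightarrow> nat \<Rightarrow> 'a set set" where
  "usable_subsets A Nmin = {S. S \<subseteq> A \<and> Nmin \<le> card S}"

text \<open>Idealized, noise-free subset-based model under uncoordinated spoofing:
  M is the set of manipulated anchors, p the true position, est S the
  multilateration estimate from subset S.
  (i) every benign usable subset yields exactly p;
  (ii) every usable subset containing a manipulated anchor yields a position
       inconsistent with p and with the estimate of every other usable subset.\<close>
definition uncoordinated_spoofing_model ::
  "'a set \<Rightarrow> nat \<Rightarrow> 'a set \<Rightarrow> real^3 \<Rightarrow> ('a set \<Rightarrow> real^3) \<Rightarrow> bool" where
  "uncoordinated_spoofing_model A Nmin M p est \<longleftrightarrow>
     (\<forall>S\<in>usable_subsets A Nmin. S \<inter> M = {} \<longrightarrow> est S = p) \<and>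
     (\<forall>S\<in>usable_subsets A Nmin. S \<inter> M \<noteq> {} \<longrightarrow> est S \<noteq> p) \<and>
     (\<forall>S\<in>usable_subsets A Nmin. \<forall>S'\<in>usable_subsets A Nmin.
        S \<inter> M \<noteq> {} \<longrightarrow> S' \<noteq> S \<longrightarrow> est S \<noteq> est S')"

end

theory Submission
  imports Defs
begin

text \<open>Any position produced by two distinct usable subsets must be the true one, since an
  estimate from a subset containing a manipulated anchor is matched by no other subset.
  Conversely, with more than N_min benign anchors, the set B of all benign anchors and
  B without one anchor are two distinct benign usable subsets, which both yield the true
  position. So the receiver outputs the (unique) position confirmed by two distinct subsets.\<close>

definition confirmed_position :: "'a set set \<Rightarrow> ('a set \<Rightarrow> 'b) \<Rightarrow> 'b \<Rightarrow> bool" where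
  "confirmed_position U est v \<longleftrightarrow> (\<exists>S\<in>U. \<exists>S'\<in>U. S \<noteq> S' \<and> est S = v \<and> est S' = v)"

lemma two_distinct_large_subsets:
  assumes "finite B" and "n < card B"
  obtains S S' where "S \<subseteq> B" "S' \<subseteq> B" "S \<noteq> S'" "n \<le> card S" "n \<le> card S'"
proof -
  from assms(2) obtain x where x: "x \<in> B"
    by (metis card.empty ex_in_conv not_less0)
  have "n \<le> card (B - {x})"
    using assms x by simp
  moreover have "B \<noteq> B - {x}"
    using x by blast
  ultimately show thesis
    using that[of B "B - {x}"] assms(2) by auto
qed

lemma confirmed_position_imp_true_position:
  assumes "uncoordinated_spoofing_model A N_min M p est"
    and "confirmed_position (usable_subsets A N_min) est v"
  shows "v = p"
proof -
  from assms(2) obtain S S' where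
    S: "S \<in> usable_subsets A N_min" "S' \<in> usable_subsets A N_min"
    and "S \<noteq> S'" "est S = v" "est S' = v"
    unfolding confirmed_position_def by blast
  then have "S \<inter> M = {}"
    using assms(1) unfolding uncoordinated_spoofing_model_def by metis
  then show "v = p"
    using assms(1) S \<open>est S = v\<close> unfolding uncoordinated_spoofing_model_def by blast
qed

lemma true_position_confirmed:
  assumes "uncoordinated_spoofing_model A N_min M p est"
    and "N_min < card (A - M)" and "finite A"
  shows "confirmed_position (usable_subsets A N_min) est p"
proof -
  obtain S S' where "S \<subseteq> A - M" "S' \<subseteq> A - M" "S \<noteq> S'" "N_min \<le> card S" "N_min \<le> card S'"
    using two_distinct_large_subsets[of "A - M" N_min] assms(2,3) by blast
  then have U: "S \<in> usable_subsets A N_min" "S' \<in> usable_subsets A N_min"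
    and "S \<inter> M = {}" "S' \<inter> M = {}"
    unfolding usable_subsets_def by auto
  then have "est S = p" "est S' = p"
    using assms(1) unfolding uncoordinated_spoofing_model_def by blast+
  with U \<open>S \<noteq> S'\<close> show ?thesis
    unfolding confirmed_position_def by blast
qed

theorem lemma1:
  fixes A :: "'a set" and N_anc N_adv N_min :: nat
  assumes "finite A"
    and "card A = N_anc"
    and "N_anc - N_adv > N_min"
  shows "\<exists>recover :: ('a set \<Rightarrow> real^3) \<Rightarrow> real^3.
           \<forall>M p est. M \<subseteq> A \<and> card M = N_adv \<and>
                     uncoordinated_spoofing_model A N_min M p est
                     \<longrightarrow> recover est = p"
proof (intro exI allI impI, elim conjE)
  fix M p est
  assume "M \<subseteq> A" "card M = N_adv"
    and model: "uncoordinated_spoofing_model A N_min M p est"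
  have "N_min < card (A - M)"
    using assms \<open>M \<subseteq> A\<close> \<open>card M = N_adv\<close> by (simp add: card_Diff_subset finite_subset)
  then have "confirmed_position (usable_subsets A N_min) est p"
    using true_position_confirmed model \<open>finite A\<close> by blast
  then show "(SOME v. confirmed_position (usable_subsets A N_min) est v) = p"
    using confirmed_position_imp_true_position[OF model] by (rule someI2)
qed

end
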